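(* Let $(\lambda_n)_{n\in\mathbb{N}_0}$ be complex numbers with $\limsup_{n\to\infty}|\lambda_n|/n\le\beta$ for some $\beta\ge0$. Let $\gamma>0$ and $f\in C^\infty[x_0,x_0+\gamma]$ (complex-valued), and assume there are constants $\sigma\ge0$, $C>0$ with $|D^{(2n)}f(t)|\le C(2n)!\sigma^{2n}$ for all $t\in[x_0,x_0+\gamma]$ and $n\in\mathbb{N}_0$. Then there is $\delta\in(0,\gamma)$ such that $$s_{2n-1}(x)=\sum_{k=0}^{2n-1}D^{(k)}f(x_0)\,\Phi_{\Lambda_k}(x-x_0)$$ converges to $f(x)$ uniformly on $[x_0,x_0+\delta]$ as $n\to\infty$.
   Context: For $\lambda_0,\dots,\lambda_n\in\mathbb{C}$ the fundamental function is the entire function $\Phi_{(\lambda_0,\dots,\lambda_n)}(z)=\frac{1}{2\pi i}\int_{|w|=R}\frac{e^{zw}}{(w-\lambda_0)\cdots(w-\lambda_n)}\,dw$, where $R>\max_j|\lambda_j|$ and the circle is positively oriented. For a sequence $(\lambda_n)$, $\Lambda_n=(\lambda_0,\dots,\lambda_n)$, $\Phi_{\Lambda_n}=\Phi_{(\lambda_0,\dots,\lambda_n)}$, and $D^{(n)}f=(\frac{d}{dt}-\lambda_0)\cdots(\frac{d}{dt}-\lambda_{n-1})f$ with $D^{(0)}f=f$ (one-sided derivatives at endpoints). *)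

theory Defs
  imports "HOL-Analysis.Analysis" "HOL-Library.Liminf_Limsup"
begin

text \<open>Fundamental function Phi_(lambda_0,...,lambda_n)(z): the contour integral over the
positively oriented circle |w| = R, R = max_j |lambda_j| + 1, written out via the
parametrisation w(t) = R exp(2 pi i t), t in [0,1], so dw = 2 pi i w(t) dt.\<close>
definition fund_radius :: "(nat \<Rightarrow> complex) \<Rightarrow> nat \<Rightarrow> real" where
  "fund_radius lam n = Max ((\<lambda>j. cmod (lam j)) ` {..n}) + 1"

definition Phi :: "(nat \<Rightarrow> complex) \<Rightarrow> nat \<Rightarrow> complex \<Rightarrow> complex" where
  "Phi lam n z =
     (let R = fund_radius lam n;
          w = (\<lambda>t::real. complex_of_real R * exp (2 * complex_of_real pi * \<i> * complex_of_real t))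
      in (1 / (2 * complex_of_real pi * \<i>)) *
         integral {0..1} (\<lambda>t. exp (z * w t) / (\<Prod>j\<le>n. (w t - lam j))
                               * (2 * complex_of_real pi * \<i> * w t)))"

fun hderiv :: "real set \<Rightarrow> nat \<Rightarrow> (real \<Rightarrow> complex) \<Rightarrow> real \<Rightarrow> complex" where
  "hderiv S 0 f = f"
| "hderiv S (Suc n) f = (\<lambda>t. vector_derivative (hderiv S n f) (at t within S))"

definition smooth_on :: "real set \<Rightarrow> (real \<Rightarrow> complex) \<Rightarrow> bool" where
  "smooth_on S f \<longleftrightarrow>
     (\<forall>n. \<forall>t\<in>S. (hderiv S n f has_vector_derivative hderiv S (Suc n) f t) (at t within S))"

fun Dop :: "(nat \<Rightarrow> complex) \<Rightarrow> real set \<Rightarrow> nat \<Rightarrow> (real \<Rightarrow> complex) \<Rightarrow> real \<Rightarrow> complex" where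
  "Dop lam S 0 f = f"
| "Dop lam S (Suc n) f =
     (\<lambda>t. vector_derivative (Dop lam S n f) (at t within S) - lam n * Dop lam S n f t)"

end

theory Submission
  imports Defs
begin

(* The proof is a Taylor argument in which the monomials are replaced by the fundamental
   functions Phi_k = Phi_(lambda_0,...,lambda_k).
   1. Expanding 1 / prod_j (w - lambda_j) in powers of 1/w and integrating termwise over the
      circle gives the power series  Phi_k(z) = sum_m h_m(lambda_0..lambda_k) z^(k+m) / (k+m)!,
      h_m the complete homogeneous symmetric polynomial.  From it we read off
      Phi_k' = lambda_k Phi_k + Phi_(k-1),  Phi_k(0) = [k = 0]  and
      |Phi_k(s)| <= s^k / k! * exp (M s)  whenever |lambda_j| <= M for j <= k.
   2. For smooth f, D^(k) f is differentiable with (D^(k) f)' = D^(k+1) f + lambda_k D^(k) f.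
   3. Hence  H(t) = sum_(k<N) D^(k) f(t) Phi_k(x - t)  has the telescoping derivative
      D^(N) f(t) Phi_(N-1)(x - t); since H(x) = f(x) and H(x0) is the partial sum, the mean
      value inequality bounds the remainder.
   4. For N = 2n the hypothesis on D^(2n) f and the linear growth |lambda_j| <= K + (beta+1) j
      (from the limsup) bound the remainder on [x0, x0 + delta] by C e^(K delta) 2n q^(2n),
      where q = sigma delta e^((beta+1) delta) <= 1/2 for delta small; this tends to 0. *)

(* hsym lam j m = h_m(lambda_0, ..., lambda_(j-1)), the complete homogeneous symmetric
   polynomial of degree m, built one variable at a time.  These are the Taylor coefficients
   of the fundamental functions. *)
fun hsym :: "(nat \<Rightarrow> complex) \<Rightarrow> nat \<Rightarrow> nat \<Rightarrow> complex" where
  "hsym lam 0 m = (if m = 0 then 1 else 0)"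
| "hsym lam (Suc j) m = (\<Sum>a\<le>m. hsym lam j a * lam j ^ (m - a))"

lemma hsym_degree_zero [simp]: "hsym lam j 0 = 1"
  by (induction j) auto

(* The Pascal-type recursion behind  Phi_k' = lambda_k Phi_k + Phi_(k-1). *)
lemma hsym_Suc_Suc:
  "hsym lam (Suc j) (Suc m) = lam j * hsym lam (Suc j) m + hsym lam j (Suc m)"
proof -
  have "(\<Sum>a\<le>m. hsym lam j a * lam j ^ (Suc m - a)) = lam j * (\<Sum>a\<le>m. hsym lam j a * lam j ^ (m - a))"
    by (simp add: sum_distrib_left Suc_diff_le mult_ac)
  then show ?thesis by (simp add: sum.atMost_Suc)
qed

lemma norm_hsym_le:
  assumes "M \<ge> 0" and "\<And>i. i \<le> j \<Longrightarrow> cmod (lam i) \<le> M"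
  shows "cmod (hsym lam (Suc j) m) \<le> real ((j + m) choose m) * M ^ m"
  using assms(2)
proof (induction j arbitrary: m)
  case 0
  have "hsym lam (Suc 0) m = lam 0 ^ m"
    by (simp add: sum.atMost_shift sum.atMost_Suc_shift)
  then show ?case using 0[of 0] assms(1) by (simp add: norm_power power_mono)
next
  case (Suc j)
  have "cmod (hsym lam (Suc (Suc j)) m) \<le> (\<Sum>a\<le>m. cmod (hsym lam (Suc j) a) * cmod (lam (Suc j)) ^ (m - a))"
    by (simp add: norm_mult norm_power order_trans[OF norm_sum])
  also have "\<dots> \<le> (\<Sum>a\<le>m. real ((j + a) choose a) * M ^ a * M ^ (m - a))"
    using Suc assms(1) by (intro sum_mono mult_mono power_mono) auto
  also have "\<dots> = (\<Sum>a\<le>m. real ((j + a) choose a)) * M ^ m"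
    by (simp add: sum_distrib_right mult.assoc power_add[symmetric])
  also have "(\<Sum>a\<le>m. real ((j + a) choose a)) = real (Suc (j + m) choose m)"
    by (simp only: of_nat_sum[symmetric] sum_choose_lower)
  finally show ?case by simp
qed

(* Generating function:  sum_m h_m u^m = 1 / prod_(i<j) (1 - lambda_i u)  for small u,
   with absolute convergence (Cauchy products of geometric series). *)
lemma hsym_generating_series:
  assumes "\<And>i. i < j \<Longrightarrow> cmod (lam i * u) < 1"
  shows "summable (\<lambda>m. cmod (hsym lam j m * u ^ m)) \<and>
         (\<lambda>m. hsym lam j m * u ^ m) sums (1 / (\<Prod>i<j. 1 - lam i * u))"
  using assms
proof (induction j)
  case 0
  have "(\<lambda>m. hsym lam 0 m * u ^ m) = (\<lambda>m. if m = 0 then 1 else 0)" by auto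
  moreover have "(\<lambda>m. cmod (hsym lam 0 m * u ^ m)) = (\<lambda>m. if m = 0 then 1 else 0)" by auto
  ultimately show ?case
    using sums_single[of 0 "\<lambda>_. 1::complex"] sums_summable[OF sums_single[of 0 "\<lambda>_. 1::real"]]
    by simp
next
  case (Suc j)
  let ?a = "\<lambda>m. hsym lam j m * u ^ m"
  let ?b = "\<lambda>m. (lam j * u) ^ m"
  have a: "summable (\<lambda>m. cmod (?a m))" "?a sums (1 / (\<Prod>i<j. 1 - lam i * u))"
    using Suc by auto
  have "cmod (lam j * u) < 1" using Suc.prems by auto
  then have b: "summable (\<lambda>m. cmod (?b m))" "?b sums (1 / (1 - lam j * u))"
    by (auto simp: norm_power intro!: summable_geometric geometric_sums)
  have Cauchy: "hsym lam (Suc j) m * u ^ m = (\<Sum>i\<le>m. ?a i * ?b (m - i))" for m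
  proof -
    have "hsym lam (Suc j) m * u ^ m = (\<Sum>i\<le>m. hsym lam j i * lam j ^ (m - i) * u ^ m)"
      by (simp add: sum_distrib_right)
    also have "\<dots> = (\<Sum>i\<le>m. ?a i * ?b (m - i))"
      by (intro sum.cong refl) (simp add: power_mult_distrib mult_ac power_add[symmetric])
    finally show ?thesis .
  qed
  have "(\<lambda>m. \<Sum>i\<le>m. ?a i * ?b (m - i)) sums (suminf ?a * suminf ?b)"
    by (rule Cauchy_product_sums[OF a(1) b(1)])
  moreover have "suminf ?a * suminf ?b = 1 / (\<Prod>i<Suc j. 1 - lam i * u)"
    using a(2) b(2) by (simp add: sums_iff)
  ultimately have sums: "(\<lambda>m. hsym lam (Suc j) m * u ^ m) sums (1 / (\<Prod>i<Suc j. 1 - lam i * u))"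
    by (simp only: Cauchy)
  have "summable (\<lambda>m. \<Sum>i\<le>m. cmod (?a i) * cmod (?b (m - i)))"
    using Cauchy_product_sums[of "\<lambda>m. cmod (?a m)" "\<lambda>m. cmod (?b m)"] a(1) b(1)
    by (simp add: sums_summable)
  moreover have "norm (cmod (hsym lam (Suc j) m * u ^ m)) \<le> (\<Sum>i\<le>m. cmod (?a i) * cmod (?b (m - i)))" for m
    unfolding Cauchy by (simp add: norm_mult order_trans[OF norm_sum])
  ultimately have "summable (\<lambda>m. cmod (hsym lam (Suc j) m * u ^ m))"
    by (rule summable_comparison_test'[where N = 0])
  with sums show ?case by blast
qed

declare hsym.simps(2)[simp del]

lemma integral_suminf_Weierstrass:
  fixes f :: "nat \<Rightarrow> real \<Rightarrow> 'a::banach"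
  assumes bound: "\<And>n x. x \<in> {a..b} \<Longrightarrow> norm (f n x) \<le> M n" and "summable M"
    and cont: "\<And>n. continuous_on {a..b} (f n)"
  shows "(\<lambda>n. integral {a..b} (f n)) sums integral {a..b} (\<lambda>x. \<Sum>n. f n x)"
proof -
  have "uniform_limit {a..b} (\<lambda>n x. \<Sum>i<n. f i x) (\<lambda>x. \<Sum>n. f n x) sequentially"
    by (rule Weierstrass_m_test[OF bound \<open>summable M\<close>])
  then obtain I J where I: "\<And>n. ((\<lambda>x. \<Sum>i<n. f i x) has_integral I n) {a..b}"
    and J: "((\<lambda>x. \<Sum>n. f n x) has_integral J) {a..b}" and lim: "I \<longlonglongrightarrow> J"
    by (rule uniform_limit_integral) (auto intro!: continuous_on_sum cont)
  have "I = (\<lambda>n. \<Sum>i<n. integral {a..b} (f i))"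
  proof
    fix n
    show "I n = (\<Sum>i<n. integral {a..b} (f i))"
      using I[of n] integral_sum[of "{..<n}" "\<lambda>i. f i" "{a..b}"]
      by (auto simp: integral_unique intro: integrable_continuous_interval cont)
  qed
  moreover have "J = integral {a..b} (\<lambda>x. \<Sum>n. f n x)"
    using J by (simp add: integral_unique)
  ultimately show ?thesis
    using lim unfolding sums_def by simp
qed

lemma integral_exp_2pi_int:
  "integral {0..1} (\<lambda>t::real. exp (2 * complex_of_real pi * \<i> * of_int n * complex_of_real t))
     = (if n = 0 then 1 else 0)"
proof (cases "n = 0")
  case False
  define c where "c = 2 * complex_of_real pi * \<i> * of_int n"
  have "c \<noteq> 0" using False by (simp add: c_def)
  have antideriv: "((\<lambda>t. exp (c * complex_of_real t) / c) has_vector_derivative exp (c * complex_of_real t))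
                     (at t within {0..1})" for t
  proof -
    have "(complex_of_real has_vector_derivative 1) (at t within {0..1})"
      using has_vector_derivative_of_real[of "\<lambda>x. x" 1, OF DERIV_ident] by simp
    moreover have "((\<lambda>z. exp (c * z) / c) has_field_derivative exp (c * complex_of_real t))
                     (at (complex_of_real t) within complex_of_real ` {0..1})"
      by (rule derivative_eq_intros refl | use \<open>c \<noteq> 0\<close> in simp)+
    ultimately show ?thesis using field_vector_diff_chain_within by (fastforce simp: o_def)
  qed
  have "((\<lambda>t. exp (c * complex_of_real t)) has_integral (exp (c * 1) / c - exp (c * 0) / c)) {0..1}"
    using fundamental_theorem_of_calculus[of 0 1 "\<lambda>t. exp (c * complex_of_real t) / c"] antideriv by simp
  moreover have "exp c = 1"
    using exp_integer_2pi[of "real_of_int n"] by (simp add: c_def mult_ac)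
  ultimately show ?thesis using False by (simp add: c_def integral_unique mult_ac)
qed simp

(* The positively oriented unit circle, parametrised over [0,1]; the integral defining Phi
   runs over  w(t) = R * circ t. *)
definition circ :: "real \<Rightarrow> complex" where
  "circ t = exp (2 * complex_of_real pi * \<i> * complex_of_real t)"

lemma norm_circ [simp]: "cmod (circ t) = 1"
  unfolding circ_def by (simp add: norm_exp_eq_Re)

lemma circ_power_diff: "circ t ^ j * inverse (circ t) ^ p
   = exp (2 * complex_of_real pi * \<i> * of_int (int j - int p) * complex_of_real t)"
proof -
  have "circ t ^ j = exp (of_nat j * (2 * complex_of_real pi * \<i> * complex_of_real t))"
    unfolding circ_def by (simp add: exp_of_nat_mult)
  moreover have "inverse (circ t) ^ p = exp (- (of_nat p * (2 * complex_of_real pi * \<i> * complex_of_real t)))"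
    unfolding circ_def by (simp add: exp_of_nat_mult exp_minus power_inverse)
  ultimately show ?thesis by (simp add: exp_add[symmetric] algebra_simps)
qed

lemma integral_circle_monomial:
  assumes "R > 0"
  shows "integral {0..1} (\<lambda>t. (of_real R * circ t) ^ j * inverse (of_real R * circ t) ^ p)
         = (if j = p then 1 else 0)"
proof -
  have "(of_real R * circ t) ^ j * inverse (of_real R * circ t) ^ p
        = of_real R ^ j * inverse (of_real R) ^ p * (circ t ^ j * inverse (circ t) ^ p)" for t
    by (simp add: power_mult_distrib mult_ac)
  then have "integral {0..1} (\<lambda>t. (of_real R * circ t) ^ j * inverse (of_real R * circ t) ^ p)
        = of_real R ^ j * inverse (of_real R) ^ p * (if int j - int p = 0 then 1 else 0)"
    unfolding circ_power_diff by (simp only: integral_mult_right integral_exp_2pi_int)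
  then show ?thesis using assms by (simp add: power_inverse)
qed

lemma integral_circle_exp_inverse_power:
  assumes "R > 0"
  shows "integral {0..1} (\<lambda>t. exp (z * (of_real R * circ t)) * inverse (of_real R * circ t) ^ p)
         = z ^ p / fact p"
proof -
  define w where "w t = of_real R * circ t" for t
  define g where "g j t = (z * w t) ^ j /\<^sub>R fact j * inverse (w t) ^ p" for j t
  have "norm (g j t) \<le> (cmod z * R) ^ j / fact j * (1 / R) ^ p" for j t
    using assms by (simp add: g_def w_def norm_mult norm_power norm_inverse divide_inverse)
  moreover have "summable (\<lambda>j. (cmod z * R) ^ j / fact j * (1 / R) ^ p)"
    by (intro summable_mult2) (simp add: summable_exp divide_inverse mult.commute)
  moreover have "continuous_on {0..1} (g j)" for j
    unfolding g_def w_def circ_def using assms by (intro continuous_intros) auto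
  ultimately have "(\<lambda>j. integral {0..1} (g j)) sums integral {0..1} (\<lambda>t. \<Sum>j. g j t)"
    by (rule integral_suminf_Weierstrass)
  moreover have "(\<Sum>j. g j t) = exp (z * w t) * inverse (w t) ^ p" for t
    unfolding g_def by (rule sums_unique[symmetric], rule sums_mult2, rule exp_converges)
  moreover have "integral {0..1} (g j) = (if j = p then z ^ p / fact p else 0)" for j
  proof -
    have "g j = (\<lambda>t. z ^ j / fact j * (w t ^ j * inverse (w t) ^ p))"
      by (auto simp: g_def scaleR_conv_of_real power_mult_distrib divide_inverse mult_ac)
    then show ?thesis
      using integral_circle_monomial[OF assms, of j p] by (simp add: w_def)
  qed
  ultimately have "(\<lambda>j. if j = p then z ^ p / fact p else 0) sums
      integral {0..1} (\<lambda>t. exp (z * w t) * inverse (w t) ^ p)"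
    by simp
  then show ?thesis
    using sums_single[of p "\<lambda>_. z ^ p / fact p"] sums_unique2 by (auto simp: w_def)
qed

lemma fund_radius_bounds:
  shows "fund_radius lam k > 0" and "\<And>j. j \<le> k \<Longrightarrow> cmod (lam j) < fund_radius lam k"
proof -
  let ?M = "Max ((\<lambda>j. cmod (lam j)) ` {..k})"
  have le: "cmod (lam j) \<le> ?M" if "j \<le> k" for j
    using that by (intro Max_ge) auto
  have "0 \<le> ?M" using le[of 0] norm_ge_zero[of "lam 0"] by linarith
  then show "fund_radius lam k > 0" by (simp add: fund_radius_def)
  show "cmod (lam j) < fund_radius lam k" if "j \<le> k" for j
    using le[OF that] by (simp add: fund_radius_def)
qed

lemma resolvent_hsym_expansion:
  assumes "\<And>j. j \<le> k \<Longrightarrow> cmod (lam j) < cmod w"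
  shows "(\<lambda>m. hsym lam (Suc k) m * inverse w ^ (k + m)) sums (w / (\<Prod>j\<le>k. w - lam j))"
proof -
  define Q where "Q = (\<Prod>i<Suc k. 1 - lam i * inverse w)"
  have "w \<noteq> 0" using assms[of 0] by auto
  have "cmod (lam i * inverse w) < 1" if "i < Suc k" for i
  proof -
    have "cmod (lam i * inverse w) = cmod (lam i) / cmod w"
      by (simp add: norm_mult norm_inverse divide_inverse)
    then show ?thesis using assms[of i] that by (simp add: divide_less_eq_1)
  qed
  then have "(\<lambda>m. hsym lam (Suc k) m * inverse w ^ m) sums (1 / Q)"
    unfolding Q_def using hsym_generating_series by blast
  from sums_mult2[OF this, of "inverse w ^ k"]
  have "(\<lambda>m. hsym lam (Suc k) m * inverse w ^ (k + m)) sums (1 / Q * inverse w ^ k)"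
    by (simp only: power_add mult_ac)
  moreover have "(\<Prod>j\<le>k. w - lam j) = w ^ Suc k * Q"
  proof -
    have "(\<Prod>j\<le>k. w - lam j) = (\<Prod>j\<le>k. w * (1 - lam j * inverse w))"
      using \<open>w \<noteq> 0\<close> by (intro prod.cong refl) (simp add: algebra_simps)
    then show ?thesis by (simp add: Q_def prod.distrib lessThan_Suc_atMost)
  qed
  moreover have "1 / Q * inverse w ^ k = w / (w ^ Suc k * Q)"
    using \<open>w \<noteq> 0\<close> by (cases "Q = 0") (simp_all add: field_simps power_inverse)
  ultimately show ?thesis by simp
qed

(* Taylor expansion of the fundamental function:
   Phi_k(z) = sum_m h_m(lambda_0..lambda_k) z^(k+m) / (k+m)!.
   The integrand is expanded in powers of 1/w and integrated termwise. *)
lemma Phi_hsym_series: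
  "(\<lambda>m. hsym lam (Suc k) m * (z ^ (k + m) / fact (k + m))) sums Phi lam k z"
proof -
  define R where "R = fund_radius lam k"
  have R: "R > 0" "\<And>j. j \<le> k \<Longrightarrow> cmod (lam j) < R"
    using fund_radius_bounds[where lam = lam and k = k] by (auto simp: R_def)
  define w where "w t = complex_of_real R * circ t" for t
  have norm_w: "cmod (w t) = R" and norm_inv_w: "cmod (inverse (w t)) = 1 / R" for t
    using R by (simp_all add: w_def norm_mult norm_inverse divide_inverse)
  define a where "a m t = hsym lam (Suc k) m * (exp (z * w t) * inverse (w t) ^ (k + m))" for m t
  have integrand: "(\<lambda>m. a m t) sums (exp (z * w t) * (w t / (\<Prod>j\<le>k. w t - lam j)))" for t
  proof -
    have "(\<lambda>m. hsym lam (Suc k) m * inverse (w t) ^ (k + m)) sums (w t / (\<Prod>j\<le>k. w t - lam j))"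
      using R(2) by (intro resolvent_hsym_expansion) (simp add: norm_w)
    from sums_mult[OF this, where c = "exp (z * w t)"]
    show ?thesis by (simp add: a_def mult_ac)
  qed
  have "Phi lam k z = (1 / (2 * complex_of_real pi * \<i>)) *
        integral {0..1} (\<lambda>t. (2 * complex_of_real pi * \<i>) * (\<Sum>m. a m t))"
    unfolding Phi_def Let_def integrand[THEN sums_unique, symmetric]
    by (simp add: R_def[symmetric] w_def circ_def field_simps)
  then have Phi_integral: "Phi lam k z = integral {0..1} (\<lambda>t. \<Sum>m. a m t)"
    by (simp add: integral_mult_right)
  define M where "M m = cmod (hsym lam (Suc k) m) * (1 / R) ^ m * (exp (cmod z * R) * (1 / R) ^ k)" for m
  have "cmod (a m t) \<le> M m" for m t
  proof -
    have "cmod (exp (z * w t)) \<le> exp (cmod z * R)"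
      using norm_exp[of "z * w t"] by (simp add: norm_mult norm_w)
    then have "cmod (a m t) \<le> cmod (hsym lam (Suc k) m) * (exp (cmod z * R) * (1 / R) ^ (k + m))"
      unfolding a_def norm_mult norm_power norm_inv_w
      using R(1) by (intro mult_left_mono mult_right_mono) auto
    then show ?thesis by (simp add: M_def power_add mult_ac)
  qed
  moreover have "summable M"
  proof -
    have "cmod (lam i * complex_of_real (1 / R)) < 1" if "i < Suc k" for i
      using R that by (simp add: norm_mult norm_divide divide_simps)
    then have "summable (\<lambda>m. cmod (hsym lam (Suc k) m * (complex_of_real (1 / R)) ^ m))"
      using hsym_generating_series by blast
    then have "summable (\<lambda>m. cmod (hsym lam (Suc k) m) * (1 / R) ^ m)"
      using R by (simp add: norm_mult norm_power norm_divide)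
    then show ?thesis unfolding M_def by (rule summable_mult2)
  qed
  moreover have "continuous_on {0..1} (a m)" for m
    unfolding a_def w_def circ_def using R by (intro continuous_intros) auto
  ultimately have "(\<lambda>m. integral {0..1} (a m)) sums Phi lam k z"
    unfolding Phi_integral by (rule integral_suminf_Weierstrass)
  moreover have "integral {0..1} (a m) = hsym lam (Suc k) m * (z ^ (k + m) / fact (k + m))" for m
    unfolding a_def using integral_circle_exp_inverse_power[OF R(1), of z "k + m"]
    by (simp add: integral_mult_right w_def)
  ultimately show ?thesis by simp
qed

definition Phi_coeff :: "(nat \<Rightarrow> complex) \<Rightarrow> nat \<Rightarrow> nat \<Rightarrow> complex" where
  "Phi_coeff lam k n = (if k \<le> n then hsym lam (Suc k) (n - k) / fact n else 0)"

lemma Phi_powser: "(\<lambda>n. Phi_coeff lam k n * z ^ n) sums Phi lam k z"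
proof -
  have "(\<lambda>i. Phi_coeff lam k (i + k) * z ^ (i + k)) = (\<lambda>m. hsym lam (Suc k) m * (z ^ (k + m) / fact (k + m)))"
    by (auto simp: Phi_coeff_def add.commute)
  then have "(\<lambda>i. Phi_coeff lam k (i + k) * z ^ (i + k)) sums Phi lam k z"
    using Phi_hsym_series by simp
  then show ?thesis
    by (subst (asm) sums_zero_iff_shift) (auto simp: Phi_coeff_def)
qed

lemma Phi_powser_abs_summable: "summable (\<lambda>n. cmod (Phi_coeff lam k n * z ^ n))"
  using powser_insidea[OF sums_summable[OF Phi_powser], of z "complex_of_real (cmod z + 1)"] by simp

lemma Phi_eq_suminf: "Phi lam k = (\<lambda>z. \<Sum>n. Phi_coeff lam k n * z ^ n)"
  using Phi_powser by (auto simp: sums_iff)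

lemma norm_Phi_coeff_le:
  assumes "M \<ge> 0" and "\<And>j. j \<le> k \<Longrightarrow> cmod (lam j) \<le> M"
  shows "cmod (Phi_coeff lam k n) \<le> (if k \<le> n then real (n choose (n - k)) * M ^ (n - k) / fact n else 0)"
proof (cases "k \<le> n")
  case True
  have "cmod (hsym lam (Suc k) (n - k)) \<le> real ((k + (n - k)) choose (n - k)) * M ^ (n - k)"
    by (rule norm_hsym_le[OF assms])
  then show ?thesis using True by (simp add: Phi_coeff_def norm_divide divide_right_mono)
qed (simp add: Phi_coeff_def)

lemma diffs_Phi_coeff:
  "diffs (Phi_coeff lam k) n = lam k * Phi_coeff lam k n + (if k = 0 then 0 else Phi_coeff lam (k - 1) n)"
proof -
  have fact_Suc_div: "of_nat (Suc n) * (x / fact (Suc n)) = (x / fact n :: complex)" for x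
  proof -
    have "(of_nat (Suc n) :: complex) \<noteq> 0" by (simp only: of_nat_eq_0_iff)
    then show ?thesis by (simp add: fact_Suc field_simps del: of_nat_Suc)
  qed
  consider "k \<le> n" | "k = Suc n" | "k > Suc n" by linarith
  then show ?thesis
  proof cases
    case 1
    then have "Suc n - k = Suc (n - k)" by simp
    with 1 have "diffs (Phi_coeff lam k) n = hsym lam (Suc k) (Suc (n - k)) / fact n"
      unfolding diffs_def Phi_coeff_def by (simp only: fact_Suc_div if_True le_SucI)
    also have "\<dots> = lam k * (hsym lam (Suc k) (n - k) / fact n) + hsym lam k (Suc (n - k)) / fact n"
      by (simp add: hsym_Suc_Suc add_divide_distrib)
    also have "\<dots> = lam k * Phi_coeff lam k n + (if k = 0 then 0 else Phi_coeff lam (k - 1) n)"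
      using 1 by (cases k) (auto simp: Phi_coeff_def Suc_diff_le Suc_diff_Suc)
    finally show ?thesis .
  next
    case 2
    then have "diffs (Phi_coeff lam k) n = of_nat (Suc n) * (1 / fact (Suc n))"
      by (simp add: diffs_def Phi_coeff_def)
    also have "\<dots> = 1 / fact n" by (rule fact_Suc_div)
    finally show ?thesis using 2 by (simp add: Phi_coeff_def)
  next
    case 3
    then show ?thesis by (simp add: diffs_def Phi_coeff_def)
  qed
qed

lemma Phi_deriv:
  "(Phi lam k has_field_derivative
      (lam k * Phi lam k z + (if k = 0 then 0 else Phi lam (k - 1) z))) (at z)"
proof -
  have "summable (\<lambda>n. Phi_coeff lam k n * complex_of_real (cmod z + 1) ^ n)"
    using Phi_powser by (rule sums_summable)
  then have "((\<lambda>x. \<Sum>n. Phi_coeff lam k n * x ^ n) has_field_derivative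
               (\<Sum>n. diffs (Phi_coeff lam k) n * z ^ n)) (at z)"
    by (rule termdiffs_strong) simp
  moreover have "(\<lambda>n. diffs (Phi_coeff lam k) n * z ^ n) sums
                   (lam k * Phi lam k z + (if k = 0 then 0 else Phi lam (k - 1) z))"
  proof (cases k)
    case 0
    then show ?thesis
      using sums_mult[OF Phi_powser, of "lam k"] by (simp add: diffs_Phi_coeff mult.assoc)
  next
    case (Suc k')
    then show ?thesis
      using sums_add[OF sums_mult[OF Phi_powser, of "lam k"] Phi_powser[of lam k' z]]
      by (simp add: diffs_Phi_coeff distrib_right mult.assoc)
  qed
  ultimately show ?thesis by (simp add: sums_iff Phi_eq_suminf[symmetric])
qed

lemma Phi_at_zero: "Phi lam k 0 = (if k = 0 then 1 else 0)"
  using sums_unique2[OF Phi_powser[of lam k 0] powser_sums_zero] by (simp add: Phi_coeff_def)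

(* Growth bound:  |Phi_k(s)| <= s^k / k! * exp (M s)  for s >= 0 if |lambda_j| <= M for j <= k.
   Coefficientwise comparison with the series of  s^k / k! * exp (M s). *)
lemma norm_Phi_le:
  assumes M: "M \<ge> 0" "\<And>j. j \<le> k \<Longrightarrow> cmod (lam j) \<le> M" and "s \<ge> 0"
  shows "cmod (Phi lam k (complex_of_real s)) \<le> s ^ k / fact k * exp (M * s)"
proof -
  define b where "b n = (if k \<le> n then real (n choose (n - k)) * M ^ (n - k) / fact n else 0) * s ^ n" for n
  have "(\<lambda>i. b (i + k)) = (\<lambda>i. s ^ k / fact k * ((M * s) ^ i / fact i))"
  proof
    fix i
    have "real ((i + k) choose i) = fact (i + k) / (fact i * fact k)"
      using binomial_fact[of i "i + k"] by simp
    then show "b (i + k) = s ^ k / fact k * ((M * s) ^ i / fact i)"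
      by (simp add: b_def power_add power_mult_distrib mult_ac)
  qed
  moreover have "(\<lambda>i. s ^ k / fact k * ((M * s) ^ i / fact i)) sums (s ^ k / fact k * exp (M * s))"
    using exp_converges[of "M * s"] by (intro sums_mult) (simp add: divide_inverse mult.commute)
  ultimately have b: "b sums (s ^ k / fact k * exp (M * s))"
    by (subst sums_zero_iff_shift[symmetric, of k]) (auto simp: b_def)
  have "cmod (Phi_coeff lam k n * complex_of_real s ^ n) \<le> b n" for n
  proof -
    have "cmod (Phi_coeff lam k n) \<le> (if k \<le> n then real (n choose (n - k)) * M ^ (n - k) / fact n else 0)"
      by (rule norm_Phi_coeff_le[OF M])
    from mult_right_mono[OF this zero_le_power[OF \<open>s \<ge> 0\<close>]] show ?thesis
      using \<open>s \<ge> 0\<close> by (simp only: b_def norm_mult norm_power norm_of_real abs_of_nonneg)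
  qed
  then have "(\<Sum>n. cmod (Phi_coeff lam k n * complex_of_real s ^ n)) \<le> suminf b"
    by (rule suminf_le[OF _ Phi_powser_abs_summable sums_summable[OF b]])
  moreover have "cmod (Phi lam k (complex_of_real s)) \<le> (\<Sum>n. cmod (Phi_coeff lam k n * complex_of_real s ^ n))"
    unfolding Phi_eq_suminf by (rule summable_norm[OF Phi_powser_abs_summable])
  ultimately show ?thesis using b by (simp add: sums_iff)
qed

lemma hderiv_combination_deriv:
  assumes "smooth_on S f" "t \<in> S"
  shows "((\<lambda>t. \<Sum>j\<le>k. c j * hderiv S j f t) has_vector_derivative
           (\<Sum>j\<le>k. c j * hderiv S (Suc j) f t)) (at t within S)"
  using assms unfolding smooth_on_def
  by (intro has_vector_derivative_sum has_vector_derivative_mult_right) auto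

(* D^(k) f is a linear combination of the ordinary derivatives f, f', ..., f^(k); this is
   what makes D^(k) f differentiable when f is smooth. *)
lemma Dop_hderiv_combination:
  assumes "a < b" and smooth: "smooth_on {a..b} f"
  shows "\<exists>c. \<forall>t\<in>{a..b}. Dop lam {a..b} k f t = (\<Sum>j\<le>k. c j * hderiv {a..b} j f t)"
proof (induction k)
  case 0
  show ?case by (rule exI[of _ "\<lambda>_. 1"]) simp
next
  case (Suc k)
  then obtain c where c: "\<And>t. t \<in> {a..b} \<Longrightarrow> Dop lam {a..b} k f t = (\<Sum>j\<le>k. c j * hderiv {a..b} j f t)"
    by blast
  define h where "h j t = hderiv {a..b} j f t" for j t
  define c' where "c' j = (if j = 0 then 0 else c (j - 1)) - lam k * (if j \<le> k then c j else 0)" for j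
  have "Dop lam {a..b} (Suc k) f t = (\<Sum>j\<le>Suc k. c' j * h j t)" if t: "t \<in> {a..b}" for t
  proof -
    have "(Dop lam {a..b} k f has_vector_derivative (\<Sum>j\<le>k. c j * h (Suc j) t)) (at t within {a..b})"
      unfolding h_def
      by (rule has_vector_derivative_weaken[OF hderiv_combination_deriv[OF smooth t] t subset_refl])
         (simp add: c)
    then have "Dop lam {a..b} (Suc k) f t = (\<Sum>j\<le>k. c j * h (Suc j) t) - lam k * (\<Sum>j\<le>k. c j * h j t)"
      using vector_derivative_within_closed_interval[OF \<open>a < b\<close> t] c[OF t] by (simp add: h_def)
    also have "\<dots> = (\<Sum>j\<le>Suc k. (if j = 0 then 0 else c (j - 1)) * h j t)
                    - lam k * (\<Sum>j\<le>Suc k. (if j \<le> k then c j else 0) * h j t)"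
    proof -
      have "(\<Sum>j\<le>Suc k. (if j = 0 then 0 else c (j - 1)) * h j t) = (\<Sum>j\<le>k. c j * h (Suc j) t)"
        by (subst sum.atMost_Suc_shift) simp
      moreover have "(\<Sum>j\<le>Suc k. (if j \<le> k then c j else 0) * h j t) = (\<Sum>j\<le>k. c j * h j t)"
        by (simp add: sum.atMost_Suc)
      ultimately show ?thesis by simp
    qed
    also have "\<dots> = (\<Sum>j\<le>Suc k. c' j * h j t)"
      unfolding c'_def by (simp add: left_diff_distrib sum_subtractf sum_distrib_left mult.assoc)
    finally show ?thesis .
  qed
  then show ?case unfolding h_def by blast
qed

lemma Dop_deriv:
  assumes "a < b" and smooth: "smooth_on {a..b} f" and t: "t \<in> {a..b}"
  shows "(Dop lam {a..b} k f has_vector_derivative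
            (Dop lam {a..b} (Suc k) f t + lam k * Dop lam {a..b} k f t)) (at t within {a..b})"
proof -
  obtain c where c: "\<And>t. t \<in> {a..b} \<Longrightarrow> Dop lam {a..b} k f t = (\<Sum>j\<le>k. c j * hderiv {a..b} j f t)"
    using Dop_hderiv_combination[OF \<open>a < b\<close> smooth] by blast
  have "(Dop lam {a..b} k f has_vector_derivative (\<Sum>j\<le>k. c j * hderiv {a..b} (Suc j) f t))
          (at t within {a..b})"
    by (rule has_vector_derivative_weaken[OF hderiv_combination_deriv[OF smooth t] t subset_refl])
       (simp add: c)
  moreover from this have "Dop lam {a..b} (Suc k) f t + lam k * Dop lam {a..b} k f t
                             = (\<Sum>j\<le>k. c j * hderiv {a..b} (Suc j) f t)"
    using vector_derivative_within_closed_interval[OF \<open>a < b\<close> t] by simp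
  ultimately show ?thesis by simp
qed

lemma norm_diff_le_derivative_bound:
  fixes H :: "real \<Rightarrow> 'a::real_normed_vector"
  assumes "a \<le> b"
    and deriv: "\<And>t. t \<in> {a..b} \<Longrightarrow> (H has_vector_derivative H' t) (at t within {a..b})"
    and bound: "\<And>t. t \<in> {a..b} \<Longrightarrow> norm (H' t) \<le> B"
  shows "norm (H b - H a) \<le> B * (b - a)"
proof -
  have "norm (H b - H a) \<le> B * norm (b - a)"
  proof (rule differentiable_bound[where f' = "\<lambda>t h. h *\<^sub>R H' t"])
    show "(H has_derivative (\<lambda>h. h *\<^sub>R H' t)) (at t within {a..b})" if "t \<in> {a..b}" for t
      using deriv[OF that] by (simp add: has_vector_derivative_def)
    show "onorm (\<lambda>h. h *\<^sub>R H' t) \<le> B" if "t \<in> {a..b}" for t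
      using bound[OF that] by (simp add: onorm_scaleR_left[OF bounded_linear_ident] onorm_id)
  qed (use \<open>a \<le> b\<close> in auto)
  then show ?thesis using \<open>a \<le> b\<close> by simp
qed

lemma Phi_reflected_deriv:
  "((\<lambda>t. Phi lam k (complex_of_real (x - t))) has_vector_derivative
     - (lam k * Phi lam k (complex_of_real (x - t)) +
        (if k = 0 then 0 else Phi lam (k - 1) (complex_of_real (x - t))))) (at t within S)"
proof -
  have "((\<lambda>t. x - t) has_real_derivative (0 - 1)) (at t within S)"
    by (intro DERIV_diff DERIV_const DERIV_ident)
  from has_vector_derivative_of_real[OF this]
  have "((\<lambda>t. complex_of_real (x - t)) has_vector_derivative (-1)) (at t within S)"
    by simp
  from field_vector_diff_chain_within[OF this has_field_derivative_at_within[OF Phi_deriv]]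
  show ?thesis by (simp add: o_def)
qed

(* The expansion of f around the point t, evaluated at x:
   Phi_expansion lam S N f x t = sum_(k<N) D^(k) f(t) Phi_k(x - t).
   For t = x0 this is the partial sum s_(N-1)(x) of the theorem. *)
definition Phi_expansion ::
    "(nat \<Rightarrow> complex) \<Rightarrow> real set \<Rightarrow> nat \<Rightarrow> (real \<Rightarrow> complex) \<Rightarrow> real \<Rightarrow> real \<Rightarrow> complex" where
  "Phi_expansion lam S N f x t = (\<Sum>k<N. Dop lam S k f t * Phi lam k (complex_of_real (x - t)))"

(* Expanding around x itself reproduces f(x), since Phi_k(0) = [k = 0]. *)
lemma Phi_expansion_at_self:
  assumes "N \<ge> 1"
  shows "Phi_expansion lam S N f x x = f x"
proof -
  have "Phi_expansion lam S N f x x = (\<Sum>k<N. if k = 0 then Dop lam S k f x else 0)"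
    unfolding Phi_expansion_def by (intro sum.cong refl) (simp add: Phi_at_zero)
  then show ?thesis using assms by (simp add: sum.delta)
qed

(* The derivative in the expansion point telescopes to the single term
   D^(N) f(t) Phi_(N-1)(x - t). *)
lemma Phi_expansion_deriv:
  assumes "a < b" and smooth: "smooth_on {a..b} f" and t: "t \<in> {a..b}" and "N \<ge> 1"
  shows "((\<lambda>t. Phi_expansion lam {a..b} N f x t) has_vector_derivative
           Dop lam {a..b} N f t * Phi lam (N - 1) (complex_of_real (x - t))) (at t within {a..b})"
proof -
  define D where "D k t = Dop lam {a..b} k f t" for k t
  define P where "P k t = Phi lam k (complex_of_real (x - t))" for k t
  define A where "A k t = (if k = 0 then 0 else D k t * P (k - 1) t)" for k t
  have "((\<lambda>t. D k t * P k t) has_vector_derivative (A (Suc k) t - A k t)) (at t within {a..b})" for k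
  proof -
    have "((\<lambda>t. D k t * P k t) has_vector_derivative
            D k t * - (lam k * P k t + (if k = 0 then 0 else P (k - 1) t)) + (D (Suc k) t + lam k * D k t) * P k t)
          (at t within {a..b})"
      unfolding D_def P_def
      by (rule has_vector_derivative_mult[OF Dop_deriv[OF \<open>a < b\<close> smooth t] Phi_reflected_deriv])
    moreover have "D k t * - (lam k * P k t + (if k = 0 then 0 else P (k - 1) t)) + (D (Suc k) t + lam k * D k t) * P k t
                     = A (Suc k) t - A k t"
      unfolding A_def by (cases "k = 0") (simp_all add: algebra_simps)
    ultimately show ?thesis by simp
  qed
  then have "((\<lambda>t. \<Sum>k<N. D k t * P k t) has_vector_derivative (\<Sum>k<N. A (Suc k) t - A k t)) (at t within {a..b})"
    by (intro has_vector_derivative_sum)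
  moreover have "(\<Sum>k<N. A (Suc k) t - A k t) = D N t * P (N - 1) t"
    using sum_lessThan_telescope[of "\<lambda>k. A k t" N] \<open>N \<ge> 1\<close> by (simp add: A_def)
  ultimately show ?thesis by (simp add: Phi_expansion_def D_def P_def)
qed

lemma Phi_expansion_remainder:
  assumes "a < b" and smooth: "smooth_on {a..b} f" and x: "x \<in> {a..b}" and "N \<ge> 1"
    and M: "M \<ge> 0" "\<And>j. j < N \<Longrightarrow> cmod (lam j) \<le> M"
    and A: "\<And>t. t \<in> {a..x} \<Longrightarrow> cmod (Dop lam {a..b} N f t) \<le> A"
  shows "cmod (f x - Phi_expansion lam {a..b} N f x a) \<le> A * (x - a) ^ N / fact (N - 1) * exp (M * (x - a))"
proof -
  define B where "B = A * ((x - a) ^ (N - 1) / fact (N - 1) * exp (M * (x - a)))"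
  have "a \<le> x" "{a..x} \<subseteq> {a..b}" using x by auto
  have "0 \<le> cmod (Dop lam {a..b} N f a)" by simp
  also have "\<dots> \<le> A" using A \<open>a \<le> x\<close> by simp
  finally have "A \<ge> 0" .
  have bound: "cmod (Dop lam {a..b} N f t * Phi lam (N - 1) (complex_of_real (x - t))) \<le> B" if t: "t \<in> {a..x}" for t
  proof -
    have "cmod (Phi lam (N - 1) (complex_of_real (x - t))) \<le> (x - t) ^ (N - 1) / fact (N - 1) * exp (M * (x - t))"
      using t M \<open>N \<ge> 1\<close> by (intro norm_Phi_le) auto
    also have "\<dots> \<le> (x - a) ^ (N - 1) / fact (N - 1) * exp (M * (x - a))"
      using t M by (intro mult_mono divide_right_mono power_mono) (auto intro: mult_left_mono)
    finally show ?thesis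
      unfolding B_def norm_mult using A[OF t] \<open>A \<ge> 0\<close> by (intro mult_mono) auto
  qed
  have deriv: "((\<lambda>t. Phi_expansion lam {a..b} N f x t) has_vector_derivative
                   Dop lam {a..b} N f t * Phi lam (N - 1) (complex_of_real (x - t))) (at t within {a..x})"
    if "t \<in> {a..x}" for t
    using that \<open>{a..x} \<subseteq> {a..b}\<close>
    by (intro has_vector_derivative_within_subset[OF Phi_expansion_deriv[OF \<open>a < b\<close> smooth _ \<open>N \<ge> 1\<close>]]) auto
  have "cmod (Phi_expansion lam {a..b} N f x x - Phi_expansion lam {a..b} N f x a) \<le> B * (x - a)"
    by (rule norm_diff_le_derivative_bound[OF \<open>a \<le> x\<close> deriv bound])
  moreover have "B * (x - a) = A * (x - a) ^ N / fact (N - 1) * exp (M * (x - a))"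
    using \<open>N \<ge> 1\<close> by (cases N) (simp_all add: B_def mult_ac)
  ultimately show ?thesis by (simp add: Phi_expansion_at_self[OF \<open>N \<ge> 1\<close>])
qed

lemma lam_linear_growth:
  assumes "limsup (\<lambda>n. ereal (cmod (lam n) / real n)) \<le> ereal \<beta>" and "\<beta> < L" and "0 \<le> L"
  shows "\<exists>K\<ge>0. \<forall>j. cmod (lam j) \<le> K + L * real j"
proof -
  have "limsup (\<lambda>n. ereal (cmod (lam n) / real n)) < ereal L"
    using assms(1) by (rule order.strict_trans1) (simp add: assms(2))
  then have "eventually (\<lambda>n. ereal (cmod (lam n) / real n) < ereal L) sequentially"
    by (rule Limsup_lessD)
  then obtain N where N: "\<And>n. n \<ge> N \<Longrightarrow> cmod (lam n) / real n < L"
    unfolding eventually_sequentially by auto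
  define K where "K = (\<Sum>j\<le>N. cmod (lam j))"
  have "cmod (lam j) \<le> K + L * real j" for j
  proof (cases "j \<le> N")
    case True
    then have "cmod (lam j) \<le> K" unfolding K_def by (intro member_le_sum) auto
    then show ?thesis using \<open>0 \<le> L\<close> by (simp add: add_increasing2)
  next
    case False
    then have "cmod (lam j) < L * real j" using N[of j] by (simp add: field_simps)
    then show ?thesis by (simp add: K_def sum_nonneg add_increasing)
  qed
  moreover have "K \<ge> 0" by (simp add: K_def sum_nonneg)
  ultimately show ?thesis by blast
qed

lemma small_step_exists:
  fixes \<gamma> \<sigma> L :: real
  assumes "\<gamma> > 0" and "\<sigma> \<ge> 0" and "L \<ge> 0"
  shows "\<exists>\<delta>. 0 < \<delta> \<and> \<delta> < \<gamma> \<and> \<sigma> * \<delta> * exp (L * \<delta>) \<le> 1 / 2"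
proof -
  define P where "P = (\<sigma> + 1) * exp L"
  define \<delta> where "\<delta> = min (\<gamma> / 2) (1 / (2 * P))"
  have "1 \<le> P"
    unfolding P_def using assms by (intro order.trans[OF _ mult_mono[of 1 "\<sigma> + 1" 1 "exp L"]]) auto
  then have "\<delta> \<le> 1" "\<delta> > 0" "\<delta> < \<gamma>"
    using assms by (auto simp: \<delta>_def min_le_iff_disj field_simps)
  then have "exp (L * \<delta>) \<le> exp L"
    using assms by (simp add: mult_left_le)
  then have "\<sigma> * \<delta> * exp (L * \<delta>) \<le> (\<sigma> + 1) * \<delta> * exp L"
    using assms \<open>\<delta> > 0\<close> by (intro mult_mono) auto
  also have "\<dots> = P * \<delta>"
    by (simp add: P_def mult_ac)
  also have "\<dots> \<le> P * (1 / (2 * P))"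
    using \<open>1 \<le> P\<close> by (intro mult_left_mono) (auto simp: \<delta>_def)
  also have "\<dots> = 1 / 2"
    using \<open>1 \<le> P\<close> by simp
  finally show ?thesis
    using \<open>\<delta> > 0\<close> \<open>\<delta> < \<gamma>\<close> by blast
qed

lemma remainder_majorant:
  assumes "N \<ge> 1" "C \<ge> 0" "\<sigma> \<ge> 0" "K \<ge> 0" "L \<ge> 0" "0 \<le> s" "s \<le> \<delta>"
  shows "C * fact N * \<sigma> ^ N * s ^ N / fact (N - 1) * exp ((K + L * real N) * s)
         \<le> C * exp (K * \<delta>) * (real N * (\<sigma> * \<delta> * exp (L * \<delta>)) ^ N)"
proof -
  have "(K + L * real N) * s = K * s + real N * (L * s)"
    by (simp add: algebra_simps)
  then have "exp ((K + L * real N) * s) = exp (K * s) * exp (L * s) ^ N"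
    by (simp only: exp_add exp_of_nat_mult)
  moreover have "fact N = real N * fact (N - 1)"
    using \<open>N \<ge> 1\<close> by (simp add: fact_reduce)
  ultimately have "C * fact N * \<sigma> ^ N * s ^ N / fact (N - 1) * exp ((K + L * real N) * s)
                   = C * exp (K * s) * (real N * (\<sigma> * s * exp (L * s)) ^ N)"
    by (simp add: power_mult_distrib)
  also have "\<dots> \<le> C * exp (K * \<delta>) * (real N * (\<sigma> * \<delta> * exp (L * \<delta>)) ^ N)"
    using assms by (intro mult_mono mult_left_mono power_mono) (auto intro: mult_left_mono)
  finally show ?thesis .
qed

lemma partial_sum_error:
  assumes "a < b" and smooth: "smooth_on {a..b} f" and "N \<ge> 1"
    and K: "K \<ge> 0" "L \<ge> 0" "\<And>j. cmod (lam j) \<le> K + L * real j"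
    and D: "C \<ge> 0" "\<sigma> \<ge> 0" "\<And>t. t \<in> {a..b} \<Longrightarrow> cmod (Dop lam {a..b} N f t) \<le> C * fact N * \<sigma> ^ N"
    and x: "x \<in> {a..a+\<delta>}" and "a + \<delta> \<le> b"
  shows "cmod (f x - Phi_expansion lam {a..b} N f x a)
         \<le> C * exp (K * \<delta>) * (real N * (\<sigma> * \<delta> * exp (L * \<delta>)) ^ N)"
proof -
  have "cmod (lam j) \<le> K + L * real N" if "j < N" for j
  proof -
    have "L * real j \<le> L * real N"
      using that K(2) by (intro mult_left_mono) auto
    then show ?thesis using K(3)[of j] by linarith
  qed
  then have "cmod (f x - Phi_expansion lam {a..b} N f x a)
           \<le> C * fact N * \<sigma> ^ N * (x - a) ^ N / fact (N - 1) * exp ((K + L * real N) * (x - a))"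
    using x \<open>a + \<delta> \<le> b\<close> K D \<open>N \<ge> 1\<close> by (intro Phi_expansion_remainder[OF \<open>a < b\<close> smooth]) auto
  also have "\<dots> \<le> C * exp (K * \<delta>) * (real N * (\<sigma> * \<delta> * exp (L * \<delta>)) ^ N)"
    using \<open>N \<ge> 1\<close> K D x by (intro remainder_majorant) auto
  finally show ?thesis .
qed

lemma even_index_bound_tendsto_zero:
  fixes q c :: real
  assumes "0 \<le> q" and "q < 1"
  shows "(\<lambda>n. c * (real (2 * n) * q ^ (2 * n))) \<longlonglongrightarrow> 0"
proof -
  have "q * q \<le> q" using assms by (simp add: mult_left_le)
  then have "q ^ 2 < 1" using assms by (simp add: power2_eq_square)
  then have "(\<lambda>n. real n * (q ^ 2) ^ n) \<longlonglongrightarrow> 0"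
    using powser_times_n_limit_0[of "q ^ 2"] \<open>0 \<le> q\<close> by simp
  then have "(\<lambda>n. 2 * c * (real n * (q ^ 2) ^ n)) \<longlonglongrightarrow> 0"
    using tendsto_mult_left[of _ 0 sequentially "2 * c"] by simp
  moreover have "(\<lambda>n. c * (real (2 * n) * q ^ (2 * n))) = (\<lambda>n. 2 * c * (real n * (q ^ 2) ^ n))"
    unfolding power_mult by (simp add: fun_eq_iff)
  ultimately show ?thesis by simp
qed

lemma uniform_limit_majorant:
  assumes "eventually (\<lambda>n. \<forall>x\<in>S. norm (f x - s n x) \<le> b n) F" and "(b \<longlongrightarrow> 0) F"
  shows "uniform_limit S s f F"
proof (rule uniform_limitI)
  fix e :: real
  assume "e > 0"
  with assms(2) have "eventually (\<lambda>n. b n < e) F" by (rule order_tendstoD)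
  with assms(1) show "eventually (\<lambda>n. \<forall>x\<in>S. dist (s n x) (f x) < e) F"
    by eventually_elim (auto simp: dist_norm norm_minus_commute intro: le_less_trans)
qed

theorem mainTheorem8:
  fixes lam :: "nat \<Rightarrow> complex" and \<beta> \<gamma> \<sigma> C x0 :: real and f :: "real \<Rightarrow> complex"
  assumes "\<beta> \<ge> 0"
    and "limsup (\<lambda>n. ereal (cmod (lam n) / real n)) \<le> ereal \<beta>"
    and "\<gamma> > 0"
    and "smooth_on {x0..x0+\<gamma>} f"
    and "\<sigma> \<ge> 0" and "C > 0"
    and "\<And>n t. t \<in> {x0..x0+\<gamma>} \<Longrightarrow>
           cmod (Dop lam {x0..x0+\<gamma>} (2*n) f t) \<le> C * fact (2*n) * \<sigma> ^ (2*n)"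
  shows "\<exists>\<delta>. 0 < \<delta> \<and> \<delta> < \<gamma> \<and>
           uniform_limit {x0..x0+\<delta>}
             (\<lambda>n x. \<Sum>k<2*n. Dop lam {x0..x0+\<gamma>} k f x0 * Phi lam k (complex_of_real (x - x0)))
             f sequentially"
proof -
  define L where "L = \<beta> + 1"
  obtain K where K: "K \<ge> 0" "\<And>j. cmod (lam j) \<le> K + L * real j"
    using lam_linear_growth[OF assms(2), of L] assms(1) by (auto simp: L_def)
  obtain \<delta> where \<delta>: "0 < \<delta>" "\<delta> < \<gamma>" and q: "\<sigma> * \<delta> * exp (L * \<delta>) \<le> 1 / 2"
    using small_step_exists[OF assms(3,5), of L] assms(1) by (auto simp: L_def)
  define q where "q = \<sigma> * \<delta> * exp (L * \<delta>)"
  define b where "b n = C * exp (K * \<delta>) * (real (2 * n) * q ^ (2 * n))" for n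
  have "cmod (f x - Phi_expansion lam {x0..x0+\<gamma>} (2 * n) f x x0) \<le> b n"
    if "n \<ge> 1" and "x \<in> {x0..x0+\<delta>}" for n x
    unfolding b_def q_def using that \<delta> K assms(1,3-7)
    by (intro partial_sum_error) (auto simp: L_def)
  then have "eventually (\<lambda>n. \<forall>x\<in>{x0..x0+\<delta>}.
               cmod (f x - Phi_expansion lam {x0..x0+\<gamma>} (2 * n) f x x0) \<le> b n) sequentially"
    by (intro eventually_sequentiallyI[of 1]) auto
  moreover have "b \<longlonglongrightarrow> 0"
    unfolding b_def using q \<delta>(1) assms(5) by (intro even_index_bound_tendsto_zero) (auto simp: q_def)
  ultimately have "uniform_limit {x0..x0+\<delta>} (\<lambda>n x. Phi_expansion lam {x0..x0+\<gamma>} (2 * n) f x x0) f sequentially"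
    by (rule uniform_limit_majorant)
  then show ?thesis
    using \<delta> by (auto simp: Phi_expansion_def)
qed

end
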